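(* Let $\mathcal C\subseteq\{0,1,2\}^n$ be a trifferent code with $|\mathcal C|\ge2$. For $x,y\in\mathcal C$ let $A(x,y)=|\{i\in[n]:x_i=y_i\}|$. Then \[ \sum_{\{x,y\}\subseteq\mathcal C,\ x\ne y}2^{A(x,y)}\ \le\ 2^{n-1}|\mathcal C| . \]
   Context: Three distinct strings $x,y,z\in\{0,1,2\}^n$ are trifferent if there is a coordinate $i\in[n]$ with $x_i,y_i,z_i$ mutually distinct. A trifferent code of block length $n$ is a subset $\mathcal C\subseteq\{0,1,2\}^n$ in which any three distinct codewords are trifferent. *)

theory Defs
  imports Main
begin

definition ternary_words :: "nat \<Rightarrow> nat list set" where
  "ternary_words n = {x. length x = n \<and> set x \<subseteq> {0,1,2}}"

definition trifferent :: "nat \<Rightarrow> nat list \<Rightarrow> nat list \<Rightarrow> nat list \<Rightarrow> bool" where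
  "trifferent n x y z \<longleftrightarrow> (\<exists>i<n. x ! i \<noteq> y ! i \<and> y ! i \<noteq> z ! i \<and> x ! i \<noteq> z ! i)"

definition trifferent_code :: "nat \<Rightarrow> nat list set \<Rightarrow> bool" where
  "trifferent_code n C \<longleftrightarrow> C \<subseteq> ternary_words n \<and>
     (\<forall>x\<in>C. \<forall>y\<in>C. \<forall>z\<in>C. x \<noteq> y \<and> y \<noteq> z \<and> x \<noteq> z \<longrightarrow> trifferent n x y z)"

definition agree :: "nat \<Rightarrow> nat list \<Rightarrow> nat list \<Rightarrow> nat" where
  "agree n x y = card {i. i < n \<and> x ! i = y ! i}"

end

theory Submission
  imports Defs
begin

text \<open>For a ternary word x let Av(x) be the set of the 2^n ternary words that differ from x in
  every coordinate; two such sets Av(x), Av(y) meet in exactly 2^A(x,y) words. If C is trifferent,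
  no word z avoids three distinct codewords x, y, w in every coordinate, since at a coordinate
  where x, y, w take all three values z would have no value left. Hence every z lies in at most
  two sets Av(x), x in C, so counting the pairs (z, {x,y}) with z in Av(x) and Av(y) gives at
  most half of the sum of the |Av(x)|, i.e. at most 2^(n-1) |C|.\<close>

lemma card_lists_nth_in:
  "card {z. length z = n \<and> (\<forall>i<n. z ! i \<in> S i)} = (\<Prod>i<n. card (S i))"
proof (induction n arbitrary: S)
  case 0
  then show ?case by simp
next
  case (Suc n)
  let ?tails = "{z. length z = n \<and> (\<forall>i<n. z ! i \<in> S (Suc i))}"
  have "{z. length z = Suc n \<and> (\<forall>i<Suc n. z ! i \<in> S i)}
      = (\<lambda>(a, z). a # z) ` (S 0 \<times> ?tails)"
    by (auto simp: length_Suc_conv All_less_Suc2)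
  moreover have "inj_on (\<lambda>(a, z). a # z) (S 0 \<times> ?tails)"
    by (auto simp: inj_on_def)
  ultimately show ?case
    by (simp add: card_image card_cartesian_product Suc.IH prod.lessThan_Suc_shift
        del: prod.lessThan_Suc)
qed

lemma pair_set_eq_card_2:
  "{{x, y} | x y. x \<in> C \<and> y \<in> C \<and> x \<noteq> y} = {B. B \<subseteq> C \<and> card B = 2}"
  by (auto simp: card_2_iff)

lemma symmetric_pair_choice:
  assumes "x \<noteq> y" "\<And>a b. f a b = f b a"
  shows "f (SOME a. a \<in> {x, y}) (SOME b. b \<in> {x, y} \<and> b \<noteq> (SOME a. a \<in> {x, y})) = f x y"
proof -
  define a where "a = (SOME a. a \<in> {x, y})"
  define b where "b = (SOME b. b \<in> {x, y} \<and> b \<noteq> a)"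
  have "a \<in> {x, y}"
    unfolding a_def by (rule someI[of _ x]) simp
  have "\<exists>b. b \<in> {x, y} \<and> b \<noteq> a"
    using assms(1) by blast
  then have "b \<in> {x, y} \<and> b \<noteq> a"
    unfolding b_def by (rule someI_ex)
  with \<open>a \<in> {x, y}\<close> consider "a = x" "b = y" | "a = y" "b = x"
    using assms(1) by auto
  then have "f a b = f x y"
    by cases (use assms(2) in auto)
  then show ?thesis
    unfolding a_def b_def .
qed

lemma twice_choose_2_le: "c \<le> 2 \<Longrightarrow> 2 * (c choose 2) \<le> c"
  by (auto simp: le_Suc_eq numeral_2_eq_2)

lemma sum_card_Inter_subsets:
  assumes "finite C" "\<And>x. x \<in> C \<Longrightarrow> finite (F x)" "k > 0"
  shows "(\<Sum>B | B \<subseteq> C \<and> card B = k. card (\<Inter>x\<in>B. F x))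
    = (\<Sum>u\<in>(\<Union>x\<in>C. F x). card {x \<in> C. u \<in> F x} choose k)"
proof -
  let ?U = "\<Union>x\<in>C. F x" and ?Bs = "{B. B \<subseteq> C \<and> card B = k}"
  have "finite ?Bs"
    using assms(1) by (intro finite_Collect_conjI disjI1 finite_Collect_subsets)
  have "(\<Inter>x\<in>B. F x) = {u \<in> ?U. B \<subseteq> {x \<in> C. u \<in> F x}}" if "B \<in> ?Bs" for B
  proof -
    have "B \<noteq> {}" "B \<subseteq> C"
      using that \<open>k > 0\<close> by auto
    then show ?thesis
      by blast
  qed
  then have "(\<Sum>B\<in>?Bs. card (\<Inter>x\<in>B. F x))
      = (\<Sum>B\<in>?Bs. card {u \<in> ?U. B \<subseteq> {x \<in> C. u \<in> F x}})"
    by (intro sum.cong refl) simp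
  also have "\<dots> = (\<Sum>u\<in>?U. card {B \<in> ?Bs. B \<subseteq> {x \<in> C. u \<in> F x}})"
    using sum.swap_restrict[OF \<open>finite ?Bs\<close>, of ?U "\<lambda>_ _. 1::nat"] assms(1,2)
    by simp
  also have "\<dots> = (\<Sum>u\<in>?U. card {B. B \<subseteq> {x \<in> C. u \<in> F x} \<and> card B = k})"
    by (intro sum.cong refl arg_cong[where f = card]) auto
  also have "\<dots> = (\<Sum>u\<in>?U. card {x \<in> C. u \<in> F x} choose k)"
    using assms(1) by (simp add: n_subsets)
  finally show ?thesis .
qed

lemma sum_card_covering:
  assumes "finite C" "\<And>x. x \<in> C \<Longrightarrow> finite (F x)"
  shows "(\<Sum>u\<in>(\<Union>x\<in>C. F x). card {x \<in> C. u \<in> F x}) = (\<Sum>x\<in>C. card (F x))"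
proof -
  have "(\<Sum>u\<in>(\<Union>x\<in>C. F x). card {x \<in> C. u \<in> F x})
      = (\<Sum>x\<in>C. card {u \<in> (\<Union>x\<in>C. F x). u \<in> F x})"
    using sum.swap_restrict[of C "\<Union>x\<in>C. F x" "\<lambda>_ _. 1::nat" "\<lambda>x u. u \<in> F x"] assms
    by simp
  also have "\<dots> = (\<Sum>x\<in>C. card (F x))"
    by (intro sum.cong refl arg_cong[where f = card]) auto
  finally show ?thesis .
qed

lemma finite_ternary_words: "finite (ternary_words n)"
  and card_ternary_words: "card (ternary_words n) = 3 ^ n"
  using finite_lists_length_eq[of "{0::nat,1,2}" n] card_lists_length_eq[of "{0::nat,1,2}" n]
  by (simp_all add: ternary_words_def conj_commute numeral_3_eq_3)

lemma ternary_words_nth: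
  "x \<in> ternary_words n \<longleftrightarrow> length x = n \<and> (\<forall>i<n. x ! i \<in> {0,1,2})"
  by (auto simp: ternary_words_def set_conv_nth)

definition avoiding_words :: "nat \<Rightarrow> nat list \<Rightarrow> nat list set" where
  "avoiding_words n x = {z. length z = n \<and> (\<forall>i<n. z ! i \<in> {0,1,2} - {x ! i})}"

lemma finite_avoiding_words: "finite (avoiding_words n x)"
  by (rule finite_subset[OF _ finite_ternary_words[of n]])
    (auto simp: avoiding_words_def ternary_words_nth)

lemma card_avoiding_words:
  assumes "x \<in> ternary_words n"
  shows "card (avoiding_words n x) = 2 ^ n"
proof -
  have "card (avoiding_words n x) = (\<Prod>i<n. card ({0::nat,1,2} - {x ! i}))"
    unfolding avoiding_words_def by (rule card_lists_nth_in)
  also have "\<dots> = (\<Prod>i<n. 2)"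
    using assms by (intro prod.cong) (auto simp: ternary_words_nth)
  finally show ?thesis by simp
qed

lemma card_avoiding_words_Int:
  assumes "x \<in> ternary_words n" "y \<in> ternary_words n"
  shows "card (avoiding_words n x \<inter> avoiding_words n y) = 2 ^ agree n x y"
proof -
  have "avoiding_words n x \<inter> avoiding_words n y =
      {z. length z = n \<and> (\<forall>i<n. z ! i \<in> {0,1,2} - {x ! i, y ! i})}"
    unfolding avoiding_words_def by auto
  then have "card (avoiding_words n x \<inter> avoiding_words n y) =
      (\<Prod>i<n. card ({0::nat,1,2} - {x ! i, y ! i}))"
    by (simp only: card_lists_nth_in)
  also have "\<dots> = (\<Prod>i<n. if x ! i = y ! i then 2 else 1)"
    using assms by (intro prod.cong) (auto simp: ternary_words_nth)
  also have "\<dots> = 2 ^ card ({..<n} \<inter> {i. x ! i = y ! i})"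
    by (simp add: prod.If_cases)
  also have "{..<n} \<inter> {i. x ! i = y ! i} = {i. i < n \<and> x ! i = y ! i}"
    by auto
  finally show ?thesis
    unfolding agree_def .
qed

lemma agree_commute: "agree n x y = agree n y x"
  by (simp add: agree_def eq_commute)

lemma trifferent_code_card_avoided_le_2:
  assumes "trifferent_code n C"
  shows "card {x \<in> C. z \<in> avoiding_words n x} \<le> 2"
proof (rule ccontr)
  assume "\<not> ?thesis"
  then have "3 \<le> card {x \<in> C. z \<in> avoiding_words n x}"
    by simp
  then obtain T where "T \<subseteq> {x \<in> C. z \<in> avoiding_words n x}" "card T = 3"
    by (rule obtain_subset_with_card_n)
  then obtain x y w where xyw: "x \<in> C" "y \<in> C" "w \<in> C" "x \<noteq> y" "y \<noteq> w" "x \<noteq> w"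
      and avoids: "z \<in> avoiding_words n x" "z \<in> avoiding_words n y" "z \<in> avoiding_words n w"
    by (auto simp: card_3_iff)
  then have "trifferent n x y w"
    using assms by (simp add: trifferent_code_def)
  then obtain i where "i < n" "x ! i \<noteq> y ! i" "y ! i \<noteq> w ! i" "x ! i \<noteq> w ! i"
    unfolding trifferent_def by blast
  moreover have "x \<in> ternary_words n" "y \<in> ternary_words n" "w \<in> ternary_words n"
    using assms xyw by (auto simp: trifferent_code_def)
  then have "x ! i \<in> {0,1,2}" "y ! i \<in> {0,1,2}" "w ! i \<in> {0,1,2}"
    using \<open>i < n\<close> by (simp_all only: ternary_words_nth)
  moreover have "z ! i \<in> {0,1,2} - {x ! i, y ! i, w ! i}"
    using avoids \<open>i < n\<close> by (auto simp: avoiding_words_def)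
  ultimately show False
    by auto
qed

lemma ternary_code_length_pos:
  assumes "C \<subseteq> ternary_words n" "2 \<le> card C"
  shows "0 < n"
proof (rule ccontr)
  assume "\<not> 0 < n"
  then have "card C \<le> card (ternary_words 0)"
    using assms(1) by (simp add: card_mono finite_ternary_words)
  with assms(2) show False
    by (simp add: card_ternary_words)
qed

lemma card_Inter_avoiding_words_pair:
  assumes "P \<subseteq> ternary_words n" "card P = 2"
  shows "2 ^ agree n (SOME x. x \<in> P) (SOME y. y \<in> P \<and> y \<noteq> (SOME x. x \<in> P))
    = card (\<Inter>x\<in>P. avoiding_words n x)"
proof -
  obtain x y where xy: "P = {x, y}" "x \<noteq> y"
    using assms(2) by (meson card_2_iff)
  then have "x \<in> ternary_words n" "y \<in> ternary_words n"
    using assms(1) by auto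
  then have "card (\<Inter>x\<in>P. avoiding_words n x) = 2 ^ agree n x y"
    by (simp add: xy card_avoiding_words_Int)
  moreover have "agree n (SOME x. x \<in> P) (SOME y. y \<in> P \<and> y \<noteq> (SOME x. x \<in> P)) = agree n x y"
    unfolding xy(1) using xy(2) agree_commute by (rule symmetric_pair_choice)
  ultimately show ?thesis
    by simp
qed

lemma trifferent_code_sum_pairs_le:
  assumes "trifferent_code n C"
  shows "2 * (\<Sum>B | B \<subseteq> C \<and> card B = 2. card (\<Inter>x\<in>B. avoiding_words n x))
    \<le> 2 ^ n * card C"
proof -
  let ?U = "\<Union>x\<in>C. avoiding_words n x"
    and ?avoided = "\<lambda>u. card {x \<in> C. u \<in> avoiding_words n x}"
  have C_words: "C \<subseteq> ternary_words n"
    using assms by (simp add: trifferent_code_def)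
  then have "finite C"
    using finite_subset finite_ternary_words by blast
  have "2 * (\<Sum>B | B \<subseteq> C \<and> card B = 2. card (\<Inter>x\<in>B. avoiding_words n x))
      = 2 * (\<Sum>u\<in>?U. ?avoided u choose 2)"
    using sum_card_Inter_subsets[OF \<open>finite C\<close> finite_avoiding_words, of 2] by simp
  also have "\<dots> = (\<Sum>u\<in>?U. 2 * (?avoided u choose 2))"
    by (rule sum_distrib_left)
  also have "\<dots> \<le> (\<Sum>u\<in>?U. ?avoided u)"
    using trifferent_code_card_avoided_le_2[OF assms] twice_choose_2_le
    by (intro sum_mono) blast
  also have "\<dots> = (\<Sum>x\<in>C. card (avoiding_words n x))"
    using \<open>finite C\<close> finite_avoiding_words by (rule sum_card_covering)
  also have "\<dots> = 2 ^ n * card C"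
    using C_words by (simp add: card_avoiding_words subset_iff)
  finally show ?thesis .
qed

theorem mainTheorem12:
  fixes n :: nat and C :: "nat list set"
  assumes "trifferent_code n C" and "card C \<ge> 2"
  shows "(\<Sum>P\<in>{{x, y} | x y. x \<in> C \<and> y \<in> C \<and> x \<noteq> y}.
            (2::nat) ^ agree n (SOME x. x \<in> P) (SOME y. y \<in> P \<and> y \<noteq> (SOME x. x \<in> P)))
         \<le> 2 ^ (n - 1) * card C"
proof -
  have C_words: "C \<subseteq> ternary_words n"
    using assms(1) by (simp add: trifferent_code_def)
  have "(\<Sum>P\<in>{{x, y} | x y. x \<in> C \<and> y \<in> C \<and> x \<noteq> y}.
      (2::nat) ^ agree n (SOME x. x \<in> P) (SOME y. y \<in> P \<and> y \<noteq> (SOME x. x \<in> P)))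
      = (\<Sum>B | B \<subseteq> C \<and> card B = 2. card (\<Inter>x\<in>B. avoiding_words n x))"
    unfolding pair_set_eq_card_2 using C_words
    by (intro sum.cong refl card_Inter_avoiding_words_pair) auto
  moreover have "(2::nat) ^ n = 2 * 2 ^ (n - 1)"
    using ternary_code_length_pos[OF C_words assms(2)] by (simp add: power_eq_if)
  ultimately show ?thesis
    using trifferent_code_sum_pairs_le[OF assms(1)] by simp
qed

end
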